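(* Let $\lambda>0$, $p\in\mathbb{N}$, and let $f\in C^p\left[0,\frac12\lambda^{-1/2}\right]$ be complex-valued with $f(0)=0$ and $\max_{[0,\frac12\lambda^{-1/2}]}|f^{(p)}|\le C(p)\,\lambda^{\frac p2+1}$ for some constant $C(p)>0$. Then for all $\varphi_0,\varphi_1\in\mathbb{R}$, $$\int_0^{\frac12\lambda^{-1/2}}\left|f(t)-e^{i\varphi_1t+i\varphi_0}\right|^2dt\ \ge\ \frac{\lambda^{-1/2}}{9}\min\left\{4^{-p-\frac52},\ 4^{-\frac{p+3}{2}}\,6^{\frac1p}\,C(p)^{-\frac1p}\,\lambda^{-\frac1p}\right\}.$$ *)

theory Defs
  imports "HOL-Analysis.Analysis"
begin

end

theory Submission
  imports Defs
begin

text \<open>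
  Let \<open>g t = f t - exp (i (\<phi>\<^sub>1 t + \<phi>\<^sub>0))\<close>, so \<open>norm (g 0) = 1\<close>, and put \<open>L = \<lambda> powr (-1/2) / 2\<close>
  and \<open>\<kappa> = (C \<lambda> powr (p/2 + 1)) powr (1/p)\<close>, so that \<open>norm (f\<^sup>(\<^sup>p\<^sup>)) \<le> \<kappa>^p\<close>.

  If the frequency \<open>\<bar>\<phi>\<^sub>1\<bar>\<close> exceeds both \<open>2\<kappa>\<close> and \<open>2p\<pi>/L\<close>, take the \<open>p\<close>-th forward difference
  with step \<open>h = \<pi>/\<bar>\<phi>\<^sub>1\<bar>\<close>: it multiplies the exponential by \<open>(-2)^p\<close>, while on \<open>f\<close> it is at most
  \<open>(\<kappa> h)^p \<le> (\<pi>/2)^p\<close>. Hence the \<open>L\<^sup>1\<close> norm of \<open>g\<close> is of order \<open>L\<close>, and Cauchy--Schwarz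
  bounds its \<open>L\<^sup>2\<close> norm from below.

  Otherwise the \<open>p\<close>-th derivative of \<open>g\<close> is bounded by \<open>\<kappa>^p + \<bar>\<phi>\<^sub>1\<bar>^p\<close>. A centred \<open>2p\<close>-th
  difference identity recovers the value at \<open>0\<close> of a polynomial of degree \<open>< p\<close> from its values at
  the nodes \<open>(j/p)^2 D\<close>, \<open>1 \<le> j \<le> p\<close>. Applied to the Taylor polynomial of \<open>g\<close> and averaged over
  dilations of the nodes, it bounds \<open>1 = norm (g 0)\<close> by a multiple of the root mean square of \<open>g\<close>
  on \<open>[0, D]\<close> plus a Taylor remainder of order \<open>(\<kappa>^p + \<bar>\<phi>\<^sub>1\<bar>^p) D^p\<close>. A scale \<open>D\<close> comparable
  to \<open>min L (1/\<kappa>)\<close> makes the remainder a fixed fraction of \<open>1\<close>, which yields the bound.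
\<close>

section \<open>Alternating binomial sums\<close>

lemma alternating_binomial_sum_power_eq_0:
  "i < N \<Longrightarrow> (\<Sum>k\<le>N. (-1)^k * real (N choose k) * real k ^ i) = 0"
proof (induction N arbitrary: i)
  case 0 then show ?case by simp
next
  case (Suc n)
  show ?case
  proof (cases i)
    case 0
    then show ?thesis using choose_alternating_sum[of "Suc n", where 'a=real] by simp
  next
    case (Suc i')
    have IH: "\<And>r. r \<le> i' \<Longrightarrow> (\<Sum>k\<le>n. (-1)^k * real (n choose k) * real k ^ r) = 0"
      using Suc.IH Suc.prems \<open>i = Suc i'\<close> by simp
    have absorb: "real (Suc n choose Suc k) * real (Suc k) = real (Suc n) * real (n choose k)" for k
      by (metis Suc_times_binomial_eq of_nat_mult)
    have "(\<Sum>k\<le>Suc n. (-1)^k * real (Suc n choose k) * real k ^ i)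
        = (\<Sum>k\<le>n. (-1)^(Suc k) * (real (Suc n choose Suc k) * real (Suc k)) * real (Suc k) ^ i')"
      by (subst sum.atMost_Suc_shift) (simp add: \<open>i = Suc i'\<close> mult.assoc)
    also have "\<dots> = - real (Suc n) * (\<Sum>k\<le>n. (-1)^k * real (n choose k) * (real k + 1) ^ i')"
      unfolding absorb by (simp add: sum_distrib_left algebra_simps)
    also have "(\<Sum>k\<le>n. (-1)^k * real (n choose k) * (real k + 1) ^ i')
        = (\<Sum>k\<le>n. \<Sum>r\<le>i'. real (i' choose r) * ((-1)^k * real (n choose k) * real k ^ r))"
      by (intro sum.cong refl, subst binomial_ring) (simp add: sum_distrib_left algebra_simps)
    also have "\<dots> = (\<Sum>r\<le>i'. real (i' choose r) * (\<Sum>k\<le>n. (-1)^k * real (n choose k) * real k ^ r))"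
      by (subst sum.swap) (simp add: sum_distrib_left)
    also have "\<dots> = 0" using IH by simp
    finally show ?thesis by simp
  qed
qed

lemma alternating_binomial_sum_centered_even_power_eq_0:
  assumes "i < p"
  shows "(\<Sum>k\<le>2*p. (-1)^k * real (2*p choose k) * (real k - real p) ^ (2*i)) = 0"
proof -
  have "(\<Sum>k\<le>2*p. (-1)^k * real (2*p choose k) * (real k - real p) ^ (2*i))
      = (\<Sum>k\<le>2*p. \<Sum>r\<le>2*i. real (2*i choose r) * (- real p) ^ (2*i - r) *
            ((-1)^k * real (2*p choose k) * real k ^ r))"
    by (intro sum.cong refl, subst diff_conv_add_uminus, subst binomial_ring)
      (simp add: sum_distrib_left algebra_simps)
  also have "\<dots> = (\<Sum>r\<le>2*i. real (2*i choose r) * (- real p) ^ (2*i - r) *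
            (\<Sum>k\<le>2*p. (-1)^k * real (2*p choose k) * real k ^ r))"
    by (subst sum.swap) (simp add: sum_distrib_left)
  also have "\<dots> = 0"
    using assms by (intro sum.neutral) (auto simp: alternating_binomial_sum_power_eq_0)
  finally show ?thesis .
qed

lemma sum_atMost_double_centered:
  fixes F :: "nat \<Rightarrow> 'a::comm_monoid_add"
  shows "(\<Sum>k\<le>2*p. F k) = F p + (\<Sum>j=1..p. F (p - j) + F (p + j))"
proof -
  have split: "{..2*p} = {..<p} \<union> ({p} \<union> {p+1..p+p})" by auto
  have "(\<Sum>k\<le>2*p. F k) = (\<Sum>k<p. F k) + (F p + (\<Sum>k=p+1..p+p. F k))"
    unfolding split by (subst sum.union_disjoint; auto)+
  moreover have "(\<Sum>k<p. F k) = (\<Sum>j=1..p. F (p - j))"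
    by (rule sum.reindex_bij_witness[of _ "\<lambda>k. p - k" "\<lambda>k. p - k"]) auto
  moreover have "(\<Sum>k=p+1..p+p. F k) = (\<Sum>j=1..p. F (p + j))"
    by (rule sum.reindex_bij_witness[of _ "\<lambda>k. p + k" "\<lambda>k. k - p"]) auto
  ultimately show ?thesis by (simp add: sum.distrib algebra_simps)
qed

text \<open>A quadrature rule with nodes \<open>y j\<^sup>2\<close>, \<open>0 \<le> j \<le> p\<close>, that is exact on polynomials of
  degree \<open>< p\<close>: it is the \<open>2p\<close>-th finite difference, centred at \<open>0\<close>, of \<open>u \<mapsto> T (y u\<^sup>2)\<close>,
  a polynomial of degree \<open>< 2p\<close> in \<open>u\<close>.\<close>

lemma binomial_quadrature_poly_eq_0:
  fixes d :: "nat \<Rightarrow> 'a::real_vector" and y :: real and p :: nat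
  defines "T \<equiv> \<lambda>t. \<Sum>i<p. (t ^ i) *\<^sub>R d i"
  shows "real (2*p choose p) *\<^sub>R T 0 +
     (\<Sum>j=1..p. (2 * (-1)^j * real (2*p choose (p - j))) *\<^sub>R T (y * real j ^ 2)) = 0"
proof -
  define w where "w = (\<lambda>k. (-1)^k * real (2*p choose k))"
  define Q where "Q = (\<lambda>u. T (y * u))"
  have "(\<Sum>k\<le>2*p. w k *\<^sub>R Q ((real k - real p) ^ 2))
      = (\<Sum>k\<le>2*p. \<Sum>i<p. (y ^ i * (w k * (real k - real p) ^ (2*i))) *\<^sub>R d i)"
    by (simp add: Q_def T_def scaleR_sum_right power_mult_distrib power_mult mult.left_commute)
  also have "\<dots> = (\<Sum>i<p. (y ^ i * (\<Sum>k\<le>2*p. w k * (real k - real p) ^ (2*i))) *\<^sub>R d i)"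
    by (subst sum.swap) (simp add: scaleR_sum_left sum_distrib_left)
  also have "\<dots> = 0"
    by (simp add: w_def alternating_binomial_sum_centered_even_power_eq_0)
  finally have sum0: "(\<Sum>k\<le>2*p. w k *\<^sub>R Q ((real k - real p) ^ 2)) = 0" .
  have pair: "w (p - j) *\<^sub>R Q ((real (p - j) - real p) ^ 2) + w (p + j) *\<^sub>R Q ((real (p + j) - real p) ^ 2)
      = (-1)^p *\<^sub>R ((2 * (-1)^j * real (2*p choose (p - j))) *\<^sub>R Q (real j ^ 2))"
    if j: "j \<in> {1..p}" for j
  proof -
    have nodes: "(real (p - j) - real p) ^ 2 = real j ^ 2" "(real (p + j) - real p) ^ 2 = real j ^ 2"
      using j by (auto simp: of_nat_diff power2_eq_square algebra_simps)
    have sym: "2*p choose (p + j) = 2*p choose (p - j)"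
      using j binomial_symmetric[of "p + j" "2*p"] by (simp add: numeral_2_eq_2)
    have signs: "(-1::real)^(p - j) = (-1)^p * (-1)^j" "(-1::real)^(p + j) = (-1)^p * (-1)^j"
      using j by (auto simp: power_add[symmetric] power_add minus_one_power_iff)
    show ?thesis
      unfolding w_def nodes sym signs by (simp add: scaleR_add_left[symmetric] algebra_simps)
  qed
  have "(\<Sum>k\<le>2*p. w k *\<^sub>R Q ((real k - real p) ^ 2))
      = w p *\<^sub>R Q ((real p - real p) ^ 2) + (\<Sum>j=1..p.
          w (p - j) *\<^sub>R Q ((real (p - j) - real p) ^ 2) + w (p + j) *\<^sub>R Q ((real (p + j) - real p) ^ 2))"
    by (rule sum_atMost_double_centered)
  also have "\<dots> = w p *\<^sub>R Q 0 + (\<Sum>j=1..p.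
          (-1)^p *\<^sub>R ((2 * (-1)^j * real (2*p choose (p - j))) *\<^sub>R Q (real j ^ 2)))"
    by (rule arg_cong2[where f="(+)"], simp, rule sum.cong, rule refl, rule pair)
  also have "\<dots> = (-1)^p *\<^sub>R (real (2*p choose p) *\<^sub>R Q 0 +
          (\<Sum>j=1..p. (2 * (-1)^j * real (2*p choose (p - j))) *\<^sub>R Q (real j ^ 2)))"
    by (simp add: w_def scaleR_add_right scaleR_sum_right)
  finally show ?thesis using sum0 by (simp add: Q_def)
qed

lemma binomial_off_centre_le:
  assumes "j \<le> p"
  shows "(2*p choose (p - j)) * (p + j) \<le> p * (2*p choose p)"
  using assms
proof (induction j)
  case 0 then show ?case by simp
next
  case (Suc j)
  have step: "(2*p choose (p - Suc j)) * (p + Suc j) = (2*p choose (p - j)) * (p - j)"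
  proof -
    define k where "k = p - Suc j"
    have k: "p - j = Suc k" "2*p - k = p + Suc j" using Suc.prems by (auto simp: k_def)
    have "(2*p - k) * (2*p choose k) = 2*p * ((2*p - 1) choose k)" by (rule binomial_absorb_comp)
    moreover have "Suc k * (2*p choose Suc k) = 2*p * ((2*p - 1) choose k)"
      using times_binomial_minus1_eq[of "Suc k" "2*p"] by simp
    ultimately show ?thesis unfolding k k_def[symmetric] by (simp add: mult.commute)
  qed
  have "(2*p choose (p - j)) * (p - j) \<le> (2*p choose (p - j)) * (p + j)" by (intro mult_left_mono) auto
  also have "\<dots> \<le> p * (2*p choose p)" using Suc by simp
  finally show ?case using step by simp
qed

definition quad_weight :: "nat \<Rightarrow> nat \<Rightarrow> real" where
  "quad_weight p j = 2 * real (2*p choose (p - j)) / real (2*p choose p)"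

lemma quad_weight_nonneg: "0 \<le> quad_weight p j"
  by (simp add: quad_weight_def)

lemma quad_weight_le:
  assumes "j \<le> p" "0 < p"
  shows "quad_weight p j \<le> 2 * real p / (real p + real j)"
proof -
  have "real (2*p choose (p - j)) * (real p + real j) \<le> real p * real (2*p choose p)"
    using binomial_off_centre_le[OF assms(1)] by (metis of_nat_add of_nat_le_iff of_nat_mult)
  then show ?thesis
    using assms by (simp add: quad_weight_def field_simps)
qed

lemma norm_poly_at_0_le_quadrature:
  fixes d :: "nat \<Rightarrow> 'a::real_normed_vector" and y :: real and p :: nat
  defines "T \<equiv> \<lambda>t. \<Sum>i<p. (t ^ i) *\<^sub>R d i"
  shows "norm (T 0) \<le> (\<Sum>j=1..p. quad_weight p j * norm (T (y * real j ^ 2)))"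
proof -
  have eq: "real (2*p choose p) *\<^sub>R T 0 =
      - (\<Sum>j=1..p. (2 * (-1)^j * real (2*p choose (p - j))) *\<^sub>R T (y * real j ^ 2))"
    using binomial_quadrature_poly_eq_0[of p d y] unfolding T_def by (simp add: eq_neg_iff_add_eq_0)
  have "real (2*p choose p) * norm (T 0) = norm (real (2*p choose p) *\<^sub>R T 0)"
    by simp
  also have "\<dots> \<le> (\<Sum>j=1..p. norm ((2 * (-1)^j * real (2*p choose (p - j))) *\<^sub>R T (y * real j ^ 2)))"
    unfolding eq norm_minus_cancel by (rule norm_sum)
  also have "\<dots> = (\<Sum>j=1..p. 2 * real (2*p choose (p - j)) * norm (T (y * real j ^ 2)))"
    by (simp add: abs_mult)
  finally have "norm (T 0) \<le> (\<Sum>j=1..p. 2 * real (2*p choose (p - j)) * norm (T (y * real j ^ 2)))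
      / real (2*p choose p)"
    by (simp add: field_simps)
  then show ?thesis
    by (simp add: quad_weight_def sum_divide_distrib)
qed

lemma integral_square_le:
  fixes h :: "real \<Rightarrow> real"
  assumes cont: "continuous_on {a..b} h" and ab: "a < b"
  shows "(integral {a..b} h)^2 \<le> (b - a) * integral {a..b} (\<lambda>t. (h t)^2)"
proof -
  \<comment> \<open>Expand \<open>0 \<le> \<integral> (h - m)\<^sup>2\<close>, where \<open>m\<close> is the mean of \<open>h\<close>.\<close>
  define m where "m = integral {a..b} h / (b - a)"
  have int_h: "(h has_integral integral {a..b} h) {a..b}"
    using cont integrable_continuous_real by blast
  have int_h2: "((\<lambda>t. (h t)^2) has_integral integral {a..b} (\<lambda>t. (h t)^2)) {a..b}"
    using cont by (intro integrable_integral integrable_continuous_real continuous_intros)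
  have "((\<lambda>t. (h t)^2 - 2 * m * h t + m^2) has_integral
      (integral {a..b} (\<lambda>t. (h t)^2) - 2 * m * integral {a..b} h + m^2 * (b - a))) {a..b}"
    using ab by (intro has_integral_add has_integral_diff has_integral_mult_right int_h int_h2)
      (use has_integral_const_real[of "m^2" a b] in \<open>auto simp: mult.commute\<close>)
  moreover have "((\<lambda>t. (h t)^2 - 2 * m * h t + m^2)) = (\<lambda>t. (h t - m)^2)"
    by (auto simp: power2_eq_square algebra_simps)
  ultimately have "0 \<le> integral {a..b} (\<lambda>t. (h t)^2) - 2 * m * integral {a..b} h + m^2 * (b - a)"
    by (metis (no_types, lifting) has_integral_nonneg zero_le_power2)
  moreover have "integral {a..b} (\<lambda>t. (h t)^2) - 2 * m * integral {a..b} h + m^2 * (b - a)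
      = integral {a..b} (\<lambda>t. (h t)^2) - (integral {a..b} h)^2 / (b - a)"
  proof -
    define w where "w = b - a"
    define J where "J = integral {a..b} h"
    have w: "w \<noteq> 0" using ab by (simp add: w_def)
    have "2 * (J / w) * J - (J / w)^2 * w = J^2 / w"
      using w by (simp add: power2_eq_square field_simps)
    then show ?thesis unfolding m_def J_def[symmetric] w_def[symmetric] by simp
  qed
  ultimately have "(integral {a..b} h)^2 / (b - a) \<le> integral {a..b} (\<lambda>t. (h t)^2)" by simp
  then show ?thesis using ab by (simp add: divide_le_eq mult.commute)
qed

lemma integral_le_sqrt_integral_square:
  fixes h :: "real \<Rightarrow> real"
  assumes cont: "continuous_on {a..b} h" and ab: "a < b"
  shows "integral {a..b} h \<le> sqrt ((b - a) * integral {a..b} (\<lambda>t. (h t)^2))"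
  using integral_square_le[OF assms] real_le_rsqrt by blast

lemma integral_square_ge:
  fixes h :: "real \<Rightarrow> real"
  assumes "continuous_on {a..b} h" "a < b" "0 \<le> c" "c \<le> integral {a..b} h"
  shows "c^2 / (b - a) \<le> integral {a..b} (\<lambda>t. (h t)^2)"
proof -
  have "c^2 \<le> (integral {a..b} h)^2" using assms by (intro power_mono) auto
  also have "\<dots> \<le> (b - a) * integral {a..b} (\<lambda>t. (h t)^2)" by (rule integral_square_le[OF assms(1,2)])
  finally show ?thesis using assms(2) by (simp add: divide_le_eq mult.commute)
qed

lemma integral_rescale_unit_interval:
  fixes h :: "real \<Rightarrow> real"
  assumes cont: "continuous_on {0..x} h" and x: "x > 0"
  shows "integral {0..1} (\<lambda>s. h (s * x)) = integral {0..x} h / x"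
proof -
  have "((\<lambda>s. x *\<^sub>R h (s * x)) has_integral integral {0 * x..1 * x} h) {0..1}"
    using x cont
    by (intro has_integral_substitution[where c=0 and d=x])
       (auto intro!: derivative_eq_intros mult_le_one simp: mult_nonneg_nonneg)
  then have "((\<lambda>s. (1 / x) *\<^sub>R (x *\<^sub>R h (s * x))) has_integral (1 / x) *\<^sub>R integral {0..x} h) {0..1}"
    by (intro has_integral_cmul) simp
  moreover have "(\<lambda>s. (1 / x) *\<^sub>R (x *\<^sub>R h (s * x))) = (\<lambda>s. h (s * x))" using x by auto
  ultimately have "((\<lambda>s. h (s * x)) has_integral integral {0..x} h / x) {0..1}" by simp
  then show ?thesis by (rule integral_unique)
qed

lemma norm_diff_le_of_vector_derivative_bound:
  fixes u :: "real \<Rightarrow> 'a::banach"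
  assumes ab: "a \<le> b"
    and der: "\<And>t. t \<in> {a..b} \<Longrightarrow> (u has_vector_derivative u' t) (at t within {a..b})"
    and bnd: "\<And>t. t \<in> {a..b} \<Longrightarrow> norm (u' t) \<le> B"
  shows "norm (u b - u a) \<le> B * (b - a)"
proof -
  have "(u' has_integral (u b - u a)) {a..b}"
    using fundamental_theorem_of_calculus[OF ab der] .
  moreover have "0 \<le> B" using bnd[of a] ab norm_ge_zero order_trans by (meson atLeastAtMost_iff order_refl)
  ultimately show ?thesis
    using has_integral_bound[where a=a and b=b and f=u', unfolded cbox_interval] bnd ab
    by (metis content_real atLeastAtMost_iff)
qed

lemma has_integral_Taylor_kernel:
  fixes t M :: real
  assumes p: "p > 0" and t: "0 \<le> t"
  shows "((\<lambda>x. M * ((t - x) ^ (p - 1) / fact (p - 1))) has_integral M * t ^ p / fact p) {0..t}"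
proof -
  have "((\<lambda>x. M * ((t - x) ^ (p - 1) / fact (p - 1))) has_integral
      ((- M * (t - t) ^ p / fact p) - (- M * (t - 0) ^ p / fact p))) {0..t}"
  proof (rule fundamental_theorem_of_calculus[OF t])
    fix x assume "x \<in> {0..t}"
    have "fact p = real p * fact (p - 1)"
      using p by (metis fact_nonzero fact_num_eq_if of_nat_eq_0_iff not_gr_zero)
    moreover have "(t - x) ^ p = (t - x) * (t - x) ^ (p - 1)"
      using p by (metis power_eq_if not_gr_zero)
    ultimately show "((\<lambda>x. - M * (t - x) ^ p / fact p) has_vector_derivative
        M * ((t - x) ^ (p - 1) / fact (p - 1))) (at x within {0..t})"
      using p unfolding has_vector_derivative_def[symmetric]
      by (auto intro!: derivative_eq_intros simp: has_real_derivative_iff_has_vector_derivative[symmetric]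
          field_simps)
  qed
  then show ?thesis using p by (simp add: zero_power)
qed

lemma norm_Taylor_remainder_le:
  fixes Dg :: "nat \<Rightarrow> real \<Rightarrow> 'a::banach"
  assumes p: "p > 0" and t: "0 \<le> t" "t \<le> D"
    and der: "\<And>m x. m < p \<Longrightarrow> x \<in> {0..D} \<Longrightarrow>
        (Dg m has_vector_derivative Dg (Suc m) x) (at x within {0..D})"
    and bnd: "\<And>x. x \<in> {0..D} \<Longrightarrow> norm (Dg p x) \<le> M"
  shows "norm (Dg 0 t - (\<Sum>i<p. (t ^ i / fact i) *\<^sub>R Dg i 0)) \<le> M * t ^ p / fact p"
proof -
  have der': "\<And>m x. m < p \<Longrightarrow> 0 \<le> x \<Longrightarrow> x \<le> t \<Longrightarrow>
        (Dg m has_vector_derivative Dg (Suc m) x) (at x within {0..t})"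
    by (rule has_vector_derivative_within_subset[OF der]) (use t in auto)
  define R where "R = (\<lambda>x. ((t - x) ^ (p - 1) / fact (p - 1)) *\<^sub>R Dg p x)"
  have Taylor: "Dg 0 t = (\<Sum>i<p. ((t - 0) ^ i / fact i) *\<^sub>R Dg i 0) + integral {0..t} R"
    using Taylor_integral[of p Dg "Dg 0" 0 t, OF p refl der' t(1)] unfolding R_def by simp
  have "norm (integral {0..t} R) \<le> integral {0..t} (\<lambda>x. M * ((t - x) ^ (p - 1) / fact (p - 1)))"
  proof (rule integral_norm_bound_integral)
    show "R integrable_on {0..t}"
      using Taylor_integrable[of p Dg "Dg 0" 0 t, OF p refl der' t(1)] unfolding R_def by simp
    show "(\<lambda>x. M * ((t - x) ^ (p - 1) / fact (p - 1))) integrable_on {0..t}"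
      using has_integral_Taylor_kernel[OF p t(1)] by blast
    fix x assume x: "x \<in> {0..t}"
    have "norm (R x) = norm (Dg p x) * ((t - x) ^ (p - 1) / fact (p - 1))"
      unfolding R_def using x by simp
    also have "\<dots> \<le> M * ((t - x) ^ (p - 1) / fact (p - 1))"
      using x t by (intro mult_right_mono bnd) auto
    finally show "norm (R x) \<le> M * ((t - x) ^ (p - 1) / fact (p - 1))" .
  qed
  also have "\<dots> = M * t ^ p / fact p"
    using has_integral_Taylor_kernel[OF p t(1)] by (rule integral_unique)
  finally show ?thesis using Taylor by simp
qed

lemma integral_average_le_sqrt:
  fixes h :: "real \<Rightarrow> real"
  assumes cont: "continuous_on {0..D} h" and x: "0 < x" "x \<le> D"
  shows "integral {0..x} h / x \<le> sqrt (integral {0..D} (\<lambda>t. (h t)^2) / x)"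
proof -
  have sub: "{0..x} \<subseteq> {0..D}" using x by auto
  have "integral {0..x} h \<le> sqrt ((x - 0) * integral {0..x} (\<lambda>t. (h t)^2))"
    using x by (intro integral_le_sqrt_integral_square continuous_on_subset[OF cont sub]) auto
  also have "\<dots> \<le> sqrt (x * integral {0..D} (\<lambda>t. (h t)^2))"
    using x cont sub
    by (auto intro!: mult_left_mono integral_subset_le integrable_continuous_real continuous_intros
        continuous_on_subset[OF cont])
  also have "\<dots> = sqrt x * sqrt (integral {0..D} (\<lambda>t. (h t)^2))"
    by (rule real_sqrt_mult)
  finally have "integral {0..x} h / x \<le> sqrt x * sqrt (integral {0..D} (\<lambda>t. (h t)^2)) / (sqrt x * sqrt x)"
    using x by (simp add: divide_right_mono)
  also have "\<dots> = sqrt (integral {0..D} (\<lambda>t. (h t)^2) / x)"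
    using x by (simp add: real_sqrt_divide field_simps)
  finally show ?thesis .
qed

lemma has_integral_power_unit_interval: "((\<lambda>s::real. s ^ p) has_integral 1 / real (p + 1)) {0..1}"
proof -
  have "((\<lambda>s::real. s ^ p) has_integral (1 ^ Suc p / real (Suc p) - 0 ^ Suc p / real (Suc p))) {0..1}"
  proof (rule fundamental_theorem_of_calculus)
    fix s :: real assume "s \<in> {0..1}"
    have "((\<lambda>s. s ^ Suc p / real (Suc p)) has_real_derivative (real (Suc p) * s ^ p / real (Suc p)))
        (at s within {0..1})"
      by (intro derivative_eq_intros refl) auto
    then show "((\<lambda>s. s ^ Suc p / real (Suc p)) has_vector_derivative s ^ p) (at s within {0..1})"
      by (simp add: has_real_derivative_iff_has_vector_derivative del: of_nat_Suc)
  qed simp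
  then show ?thesis by simp
qed

section \<open>Recovering the value at zero from the \<open>L\<^sup>2\<close> mass\<close>

lemma continuous_on_derivative_chain:
  fixes Dg :: "nat \<Rightarrow> real \<Rightarrow> 'a::real_normed_vector"
  assumes "p > 0"
    and "\<And>k t. k < p \<Longrightarrow> t \<in> S \<Longrightarrow> (Dg k has_vector_derivative Dg (Suc k) t) (at t within S)"
  shows "continuous_on S (Dg 0)"
  using assms by (meson continuous_on_eq_continuous_within has_vector_derivative_continuous)

lemma norm_at_0_le_quadrature_Taylor:
  fixes Dg :: "nat \<Rightarrow> real \<Rightarrow> 'a::banach"
  assumes p: "p > 0" and y: "0 \<le> y" "y * real p ^ 2 \<le> D"
    and der: "\<And>m x. m < p \<Longrightarrow> x \<in> {0..D} \<Longrightarrow>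
        (Dg m has_vector_derivative Dg (Suc m) x) (at x within {0..D})"
    and bnd: "\<And>x. x \<in> {0..D} \<Longrightarrow> norm (Dg p x) \<le> M"
  shows "norm (Dg 0 0) \<le>
    (\<Sum>j=1..p. quad_weight p j * (norm (Dg 0 (y * real j ^ 2)) + M * (y * real j ^ 2) ^ p / fact p))"
proof -
  define T where "T = (\<lambda>t::real. \<Sum>i<p. (t ^ i) *\<^sub>R ((1 / fact i) *\<^sub>R Dg i 0))"
  have "T 0 = (\<Sum>i<p. (if i = 0 then Dg 0 0 else 0))"
    unfolding T_def by (intro sum.cong refl) (auto simp: zero_power)
  also have "\<dots> = Dg 0 0" using p by (simp add: sum.delta')
  finally have T0: "T 0 = Dg 0 0" .
  have Taylor: "norm (T (y * real j ^ 2)) \<le> norm (Dg 0 (y * real j ^ 2)) + M * (y * real j ^ 2) ^ p / fact p"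
    if j: "j \<in> {1..p}" for j
  proof -
    have "real j ^ 2 \<le> real p ^ 2" using j by (intro power_mono) auto
    then have "y * real j ^ 2 \<le> D" using y by (meson mult_left_mono order_trans)
    then have "norm (Dg 0 (y * real j ^ 2) - T (y * real j ^ 2)) \<le> M * (y * real j ^ 2) ^ p / fact p"
      unfolding T_def using norm_Taylor_remainder_le[OF p _ _ der bnd] y by simp
    then show ?thesis
      using norm_triangle_ineq2[of "T (y * real j ^ 2)" "Dg 0 (y * real j ^ 2)"]
      by (simp add: norm_minus_commute)
  qed
  have "norm (Dg 0 0) \<le> (\<Sum>j=1..p. quad_weight p j * norm (T (y * real j ^ 2)))"
    unfolding T0[symmetric] T_def by (rule norm_poly_at_0_le_quadrature)
  also have "\<dots> \<le> (\<Sum>j=1..p. quad_weight p j *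
      (norm (Dg 0 (y * real j ^ 2)) + M * (y * real j ^ 2) ^ p / fact p))"
    by (intro sum_mono mult_left_mono quad_weight_nonneg Taylor)
  finally show ?thesis .
qed

lemma norm_at_0_le_node_averages:
  fixes Dg :: "nat \<Rightarrow> real \<Rightarrow> 'a::banach"
  assumes p: "p > 0" and D: "D > 0"
    and der: "\<And>m x. m < p \<Longrightarrow> x \<in> {0..D} \<Longrightarrow>
        (Dg m has_vector_derivative Dg (Suc m) x) (at x within {0..D})"
    and bnd: "\<And>x. x \<in> {0..D} \<Longrightarrow> norm (Dg p x) \<le> M"
  defines "x \<equiv> \<lambda>j. D * (real j / real p) ^ 2"
  shows "norm (Dg 0 0) \<le> (\<Sum>j=1..p. quad_weight p j *
    (integral {0..x j} (\<lambda>t. norm (Dg 0 t)) / x j + M * x j ^ p / fact (p + 1)))"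
proof -
  have x: "0 < x j" "x j \<le> D" if "j \<in> {1..p}" for j
    using that p D by (auto simp: x_def power_le_one mult_left_le)
  have cont: "continuous_on {0..D} (\<lambda>t. norm (Dg 0 t))"
    using continuous_on_derivative_chain[where Dg=Dg and S="{0..D}", OF p der] by (intro continuous_intros)
  have average: "((\<lambda>s. norm (Dg 0 (s * x j))) has_integral integral {0..x j} (\<lambda>t. norm (Dg 0 t)) / x j) {0..1}"
    if j: "j \<in> {1..p}" for j
  proof -
    have cont_j: "continuous_on {0..x j} (\<lambda>t. norm (Dg 0 t))"
      using x[OF j] by (intro continuous_on_subset[OF cont]) auto
    have "(\<lambda>s. s * x j) ` {0..1} \<subseteq> {0..x j}"
      using x[OF j] by (auto simp: mult_le_cancel_right1)
    then have "continuous_on {0..1} (\<lambda>s. norm (Dg 0 (s * x j)))"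
      by (intro continuous_on_compose2[OF cont_j]) (auto intro!: continuous_intros)
    then show ?thesis
      using integral_rescale_unit_interval[OF cont_j x(1)[OF j]] integrable_continuous_real
      by (metis integrable_integral)
  qed
  have remainder: "((\<lambda>s. M * (s * x j) ^ p / fact p) has_integral M * x j ^ p / fact (p + 1)) {0..1}" for j
  proof -
    have "((\<lambda>s. (M * x j ^ p / fact p) * s ^ p) has_integral (M * x j ^ p / fact p) * (1 / real (p + 1))) {0..1}"
      by (rule has_integral_mult_right[OF has_integral_power_unit_interval])
    then show ?thesis
      by (simp add: power_mult_distrib fact_Suc field_simps del: of_nat_Suc)
  qed
  have "((\<lambda>s. \<Sum>j=1..p. quad_weight p j * (norm (Dg 0 (s * x j)) + M * (s * x j) ^ p / fact p)) has_integral
      (\<Sum>j=1..p. quad_weight p j * (integral {0..x j} (\<lambda>t. norm (Dg 0 t)) / x j + M * x j ^ p / fact (p + 1))))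
      {0..1}"
    by (intro has_integral_sum has_integral_mult_right has_integral_add average remainder) auto
  moreover have "norm (Dg 0 0) \<le> (\<Sum>j=1..p. quad_weight p j * (norm (Dg 0 (s * x j)) + M * (s * x j) ^ p / fact p))"
    if s: "s \<in> {0..1}" for s
  proof -
    have "s * D / real p ^ 2 * real j ^ 2 = s * x j" for j
      by (simp add: x_def power_divide)
    moreover have "s * D / real p ^ 2 * real p ^ 2 \<le> D"
      using s p D by (simp add: mult_le_cancel_right1)
    ultimately show ?thesis
      using norm_at_0_le_quadrature_Taylor[OF p _ _ der bnd, of "s * D / real p ^ 2"] s D by simp
  qed
  ultimately show ?thesis
    using has_integral_le[OF has_integral_const_real[of "norm (Dg 0 0)" 0 1]] by simp
qed

definition mass_coeff :: "nat \<Rightarrow> real" where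
  "mass_coeff p = 2 * (\<Sum>j=1..p. real p ^ 2 / (real j * (real p + real j)))"

definition remainder_coeff :: "nat \<Rightarrow> real" where
  "remainder_coeff p = 2 * (\<Sum>j=1..p. (real p / (real p + real j)) * (real j / real p) ^ (2*p)) / fact (p + 1)"

lemma quad_weight_node_average_le:
  fixes h :: "real \<Rightarrow> real"
  assumes cont: "continuous_on {0..D} h" and D: "D > 0" and j: "j \<in> {1..p}"
  defines "x \<equiv> D * (real j / real p) ^ 2" and "I \<equiv> integral {0..D} (\<lambda>t. (h t)^2)"
  shows "quad_weight p j * (integral {0..x} h / x)
    \<le> 2 * (real p ^ 2 / (real j * (real p + real j))) * sqrt (I / D)"
proof -
  have x: "0 < x" "x \<le> D"
    using j D by (auto simp: x_def power_le_one mult_left_le)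
  have I: "0 \<le> I"
    unfolding I_def using cont by (intro integral_nonneg integrable_continuous_real continuous_intros) auto
  have "integral {0..x} h / x \<le> sqrt (I / x)"
    unfolding I_def using cont x by (rule integral_average_le_sqrt)
  also have "I / x = (real p / real j) ^ 2 * (I / D)"
    using D j by (simp add: x_def power_divide field_simps)
  also have "sqrt \<dots> = (real p / real j) * sqrt (I / D)"
    by (subst real_sqrt_mult) simp
  finally have "quad_weight p j * (integral {0..x} h / x) \<le> quad_weight p j * ((real p / real j) * sqrt (I / D))"
    by (rule mult_left_mono[OF _ quad_weight_nonneg])
  also have "\<dots> \<le> 2 * real p / (real p + real j) * ((real p / real j) * sqrt (I / D))"
    using j I D by (intro mult_right_mono quad_weight_le) auto
  finally show ?thesis by (simp add: power2_eq_square field_simps)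
qed

lemma norm_at_0_le_mass:
  fixes Dg :: "nat \<Rightarrow> real \<Rightarrow> 'a::banach"
  assumes p: "p > 0" and D: "D > 0"
    and der: "\<And>m x. m < p \<Longrightarrow> x \<in> {0..D} \<Longrightarrow>
        (Dg m has_vector_derivative Dg (Suc m) x) (at x within {0..D})"
    and bnd: "\<And>x. x \<in> {0..D} \<Longrightarrow> norm (Dg p x) \<le> M"
  shows "norm (Dg 0 0) \<le> mass_coeff p * sqrt (integral {0..D} (\<lambda>t. (norm (Dg 0 t))^2) / D)
    + remainder_coeff p * M * D ^ p"
proof -
  define I where "I = integral {0..D} (\<lambda>t. (norm (Dg 0 t))^2)"
  define x where "x = (\<lambda>j. D * (real j / real p) ^ 2)"
  have M: "0 \<le> M" using bnd[of 0] D by (meson atLeastAtMost_iff less_imp_le norm_ge_zero order_trans order_refl)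
  have cont: "continuous_on {0..D} (Dg 0)"
    by (rule continuous_on_derivative_chain[where Dg=Dg, OF p der])
  have w: "0 \<le> quad_weight p j" "quad_weight p j \<le> 2 * real p / (real p + real j)" if "j \<in> {1..p}" for j
    using that p by (auto simp: quad_weight_nonneg quad_weight_le)
  have average: "quad_weight p j * (integral {0..x j} (\<lambda>t. norm (Dg 0 t)) / x j)
      \<le> 2 * (real p ^ 2 / (real j * (real p + real j))) * sqrt (I / D)" if j: "j \<in> {1..p}" for j
    unfolding x_def I_def using cont D j by (intro quad_weight_node_average_le continuous_intros)
  have remainder: "quad_weight p j * (M * x j ^ p / fact (p + 1))
      \<le> M * D ^ p * (2 * ((real p / (real p + real j)) * (real j / real p) ^ (2*p)) / fact (p + 1))"
    if j: "j \<in> {1..p}" for j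
  proof -
    have "quad_weight p j * (M * x j ^ p / fact (p + 1))
        = M * D ^ p * (quad_weight p j * (real j / real p) ^ (2*p) / fact (p + 1))"
      by (simp add: x_def power_mult_distrib power_mult)
    also have "\<dots> \<le> M * D ^ p * (2 * real p / (real p + real j) * (real j / real p) ^ (2*p) / fact (p + 1))"
      using w[OF j] M D by (intro mult_left_mono divide_right_mono mult_right_mono) auto
    finally show ?thesis by simp
  qed
  have "norm (Dg 0 0) \<le> (\<Sum>j=1..p. quad_weight p j *
      (integral {0..x j} (\<lambda>t. norm (Dg 0 t)) / x j + M * x j ^ p / fact (p + 1)))"
    unfolding x_def by (rule norm_at_0_le_node_averages[OF p D der bnd])
  also have "\<dots> \<le> (\<Sum>j=1..p. 2 * (real p ^ 2 / (real j * (real p + real j))) * sqrt (I / D)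
      + M * D ^ p * (2 * ((real p / (real p + real j)) * (real j / real p) ^ (2*p)) / fact (p + 1)))"
  proof (rule sum_mono)
    fix j assume j: "j \<in> {1..p}"
    show "quad_weight p j * (integral {0..x j} (\<lambda>t. norm (Dg 0 t)) / x j + M * x j ^ p / fact (p + 1))
        \<le> 2 * (real p ^ 2 / (real j * (real p + real j))) * sqrt (I / D)
          + M * D ^ p * (2 * ((real p / (real p + real j)) * (real j / real p) ^ (2*p)) / fact (p + 1))"
      unfolding distrib_left[of "quad_weight p j"] using average[OF j] remainder[OF j] by (rule add_mono)
  qed
  also have "\<dots> = mass_coeff p * sqrt (I / D) + remainder_coeff p * M * D ^ p"
    unfolding sum.distrib mass_coeff_def remainder_coeff_def
      sum_distrib_right[symmetric] sum_distrib_left[symmetric] sum_divide_distrib[symmetric]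
    by simp
  finally show ?thesis unfolding I_def .
qed

section \<open>Forward differences\<close>

fun fwd_diff :: "nat \<Rightarrow> real \<Rightarrow> (real \<Rightarrow> 'a::ab_group_add) \<Rightarrow> real \<Rightarrow> 'a" where
  "fwd_diff 0 h u x = u x"
| "fwd_diff (Suc m) h u x = fwd_diff m h u (x + h) - fwd_diff m h u x"

lemma fwd_diff_diff: "fwd_diff m h (\<lambda>t. u t - v t) x = fwd_diff m h u x - fwd_diff m h v x"
  by (induction m arbitrary: x) (auto simp: algebra_simps)

lemma fwd_diff_shift: "fwd_diff m h u (x + c) = fwd_diff m h (\<lambda>s. u (s + c)) x"
proof (induction m arbitrary: x)
  case 0 then show ?case by simp
next
  case (Suc m)
  have "fwd_diff m h u (x + c + h) = fwd_diff m h (\<lambda>s. u (s + c)) (x + h)"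
    using Suc.IH[of "x + h"] by (simp add: add_ac)
  then show ?case using Suc.IH[of x] by simp
qed

lemma fwd_diff_geometric:
  fixes u :: "real \<Rightarrow> 'a::comm_ring_1"
  assumes "\<And>x. u (x + h) = z * u x"
  shows "fwd_diff m h u x = u x * (z - 1) ^ m"
  using assms by (induction m arbitrary: x) (auto simp: algebra_simps)

lemma has_vector_derivative_fwd_diff:
  fixes u u' :: "real \<Rightarrow> 'a::real_normed_vector"
  assumes "\<And>i. i \<le> m \<Longrightarrow> ((\<lambda>t. u (t + real i * h)) has_vector_derivative u' (y + real i * h)) (at y within T)"
  shows "((\<lambda>t. fwd_diff m h u t) has_vector_derivative fwd_diff m h u' y) (at y within T)"
  using assms
proof (induction m arbitrary: u u')
  case 0
  then show ?case by simp
next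
  case (Suc m)
  have unshifted: "((\<lambda>t. fwd_diff m h u t) has_vector_derivative fwd_diff m h u' y) (at y within T)"
    using Suc.prems by (intro Suc.IH) auto
  have shifted: "((\<lambda>t. fwd_diff m h (\<lambda>s. u (s + h)) t) has_vector_derivative fwd_diff m h (\<lambda>s. u' (s + h)) y) (at y within T)"
  proof (rule Suc.IH)
    fix i assume "i \<le> m"
    then have "((\<lambda>t. u (t + real (Suc i) * h)) has_vector_derivative u' (y + real (Suc i) * h)) (at y within T)"
      by (intro Suc.prems) auto
    then show "((\<lambda>t. u (t + real i * h + h)) has_vector_derivative u' (y + real i * h + h)) (at y within T)"
      by (simp add: algebra_simps)
  qed
  show ?case
    using has_vector_derivative_diff[OF shifted unshifted] by (simp add: fwd_diff_shift[symmetric])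
qed

lemma continuous_on_fwd_diff:
  fixes u :: "real \<Rightarrow> 'a::real_normed_vector"
  assumes "continuous_on {0..X + real m * h} u" "0 \<le> h"
  shows "continuous_on {0..X} (fwd_diff m h u)"
  using assms
proof (induction m arbitrary: X)
  case 0 then show ?case by simp
next
  case (Suc m)
  have cont: "continuous_on {0..X + h} (fwd_diff m h u)"
    using Suc.prems by (intro Suc.IH) (auto simp: algebra_simps)
  have "continuous_on {0..X} (fwd_diff m h u)"
    using Suc.prems by (intro continuous_on_subset[OF cont]) auto
  moreover have "continuous_on {0..X} (\<lambda>x. fwd_diff m h u (x + h))"
    using Suc.prems by (intro continuous_on_compose2[OF cont]) (auto intro!: continuous_intros)
  ultimately show ?case using continuous_on_diff by (fastforce simp: fun_diff_def)
qed

lemma integral_norm_fwd_diff_le: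
  fixes u :: "real \<Rightarrow> 'a::real_normed_vector"
  assumes "continuous_on {0..X + real m * h} u" "0 \<le> h" "0 \<le> X"
  shows "integral {0..X} (\<lambda>x. norm (fwd_diff m h u x)) \<le> 2 ^ m * integral {0..X + real m * h} (\<lambda>t. norm (u t))"
  using assms
proof (induction m arbitrary: X)
  case 0 then show ?case by simp
next
  case (Suc m)
  have cont: "continuous_on {0..X + h} (\<lambda>x. norm (fwd_diff m h u x))"
    using Suc.prems by (intro continuous_intros continuous_on_fwd_diff) (auto simp: algebra_simps)
  have integrable: "(\<lambda>x. norm (fwd_diff m h u x)) integrable_on {a..b}" if "{a..b} \<subseteq> {0..X + h}" for a b
    using continuous_on_subset[OF cont that] integrable_continuous_real by blast
  have shifted_integrable: "(\<lambda>x. norm (fwd_diff m h u (x + h))) integrable_on {0..X}"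
    using Suc.prems by (intro integrable_continuous_real continuous_on_compose2[OF cont])
      (auto intro!: continuous_intros)
  have "integral {0..X} (\<lambda>x. norm (fwd_diff (Suc m) h u x))
      \<le> integral {0..X} (\<lambda>x. norm (fwd_diff m h u (x + h)) + norm (fwd_diff m h u x))"
  proof (rule integral_le)
    show "(\<lambda>x. norm (fwd_diff (Suc m) h u x)) integrable_on {0..X}"
      using Suc.prems by (intro integrable_continuous_real continuous_intros continuous_on_fwd_diff) auto
    show "(\<lambda>x. norm (fwd_diff m h u (x + h)) + norm (fwd_diff m h u x)) integrable_on {0..X}"
      using shifted_integrable integrable[of 0 X] Suc.prems by (intro integrable_add) auto
  qed (simp add: norm_triangle_ineq4)
  also have "\<dots> = integral {0..X} (\<lambda>x. norm (fwd_diff m h u (x + h))) + integral {0..X} (\<lambda>x. norm (fwd_diff m h u x))"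
    using shifted_integrable integrable[of 0 X] Suc.prems by (intro integral_add) auto
  also have "integral {0..X} (\<lambda>x. norm (fwd_diff m h u (x + h))) = integral {0 + h..X + h} (\<lambda>x. norm (fwd_diff m h u x))"
    using integral_shift[of 0 h X "\<lambda>x. norm (fwd_diff m h u x)"] continuous_on_subset[OF cont] Suc.prems
    by (simp add: o_def)
  also have "\<dots> \<le> integral {0..X + h} (\<lambda>x. norm (fwd_diff m h u x))"
    using Suc.prems by (intro integral_subset_le integrable) auto
  also have "integral {0..X} (\<lambda>x. norm (fwd_diff m h u x)) \<le> integral {0..X + h} (\<lambda>x. norm (fwd_diff m h u x))"
    using Suc.prems by (intro integral_subset_le integrable) auto
  also have "integral {0..X + h} (\<lambda>x. norm (fwd_diff m h u x)) \<le> 2 ^ m * integral {0..X + h + real m * h} (\<lambda>t. norm (u t))"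
    using Suc.prems by (intro Suc.IH) (auto simp: algebra_simps)
  finally show ?case by (simp add: algebra_simps)
qed

lemma has_vector_derivative_shift:
  fixes f :: "real \<Rightarrow> 'a::real_normed_vector"
  assumes "(f has_vector_derivative f') (at (y + c) within S)" "(\<lambda>t. t + c) ` T \<subseteq> S"
  shows "((\<lambda>t. f (t + c)) has_vector_derivative f') (at y within T)"
proof -
  have "((\<lambda>t. t + c) has_vector_derivative 1) (at y within T)"
    by (auto intro!: derivative_eq_intros simp: has_real_derivative_iff_has_vector_derivative[symmetric])
  from vector_diff_chain_within[OF this has_vector_derivative_within_subset[OF assms]]
  show ?thesis by (simp add: o_def)
qed

lemma norm_fwd_diff_derivative_le:
  fixes Df :: "nat \<Rightarrow> real \<Rightarrow> 'a::banach"
  assumes der: "\<And>k t. k < p \<Longrightarrow> t \<in> {0..L} \<Longrightarrow>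
        (Df k has_vector_derivative Df (Suc k) t) (at t within {0..L})"
    and bnd: "\<And>t. t \<in> {0..L} \<Longrightarrow> norm (Df p t) \<le> K"
  shows "m \<le> p \<Longrightarrow> 0 \<le> h \<Longrightarrow> 0 \<le> x \<Longrightarrow> x + real m * h \<le> L \<Longrightarrow>
      norm (fwd_diff m h (Df (p - m)) x) \<le> K * h ^ m"
proof (induction m arbitrary: x)
  case 0 then show ?case using bnd by simp
next
  case (Suc m)
  define k where "k = p - Suc m"
  have pk: "p - m = Suc k" "k < p" using Suc.prems by (auto simp: k_def)
  define F where "F = (\<lambda>y. fwd_diff m h (Df k) y)"
  have deriv: "(F has_vector_derivative fwd_diff m h (Df (Suc k)) y) (at y within {x..x+h})"
    if y: "y \<in> {x..x+h}" for y
    unfolding F_def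
  proof (rule has_vector_derivative_fwd_diff)
    fix i assume "i \<le> m"
    then have "real i * h \<le> real m * h" using Suc.prems by (intro mult_right_mono) auto
    then have "(\<lambda>t. t + real i * h) ` {x..x+h} \<subseteq> {0..L}" "y + real i * h \<in> {0..L}"
      using y Suc.prems by (auto simp: algebra_simps)
    then show "((\<lambda>t. Df k (t + real i * h)) has_vector_derivative Df (Suc k) (y + real i * h))
        (at y within {x..x+h})"
      by (intro has_vector_derivative_shift[OF der[OF pk(2)]])
  qed
  have bound: "norm (fwd_diff m h (Df (Suc k)) y) \<le> K * h ^ m" if y: "y \<in> {x..x+h}" for y
  proof -
    have "norm (fwd_diff m h (Df (p - m)) y) \<le> K * h ^ m"
      using y Suc.prems by (intro Suc.IH) (auto simp: algebra_simps)
    then show ?thesis using pk by simp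
  qed
  have "norm (F (x + h) - F x) \<le> K * h ^ m * (x + h - x)"
    using Suc.prems deriv bound by (intro norm_diff_le_of_vector_derivative_bound) auto
  then show ?case using pk by (simp add: F_def k_def[symmetric] algebra_simps)
qed

lemma norm_fwd_diff_sub_antiperiodic_ge:
  fixes Df :: "nat \<Rightarrow> real \<Rightarrow> 'a::{banach, real_normed_field}"
  assumes der: "\<And>k t. k < p \<Longrightarrow> t \<in> {0..L} \<Longrightarrow>
        (Df k has_vector_derivative Df (Suc k) t) (at t within {0..L})"
    and bnd: "\<And>t. t \<in> {0..L} \<Longrightarrow> norm (Df p t) \<le> K"
    and E: "\<And>x. E (x + h) = - E x" "\<And>x. norm (E x) = 1"
    and x: "0 \<le> x" "0 \<le> h" "x + real p * h \<le> L"
  shows "2 ^ p - K * h ^ p \<le> norm (fwd_diff p h (\<lambda>t. Df 0 t - E t) x)"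
proof -
  have "fwd_diff p h E x = E x * (- 1 - 1) ^ p" by (rule fwd_diff_geometric) (simp add: E)
  then have "norm (fwd_diff p h E x) = 2 ^ p" by (simp add: norm_mult norm_power E)
  moreover have "norm (fwd_diff p h (Df (p - p)) x) \<le> K * h ^ p"
    using x by (intro norm_fwd_diff_derivative_le[OF der bnd]) auto
  ultimately show ?thesis
    using norm_triangle_ineq3[of "fwd_diff p h E x" "fwd_diff p h (Df 0) x"]
    by (simp add: fwd_diff_diff norm_minus_commute)
qed

text \<open>The \<open>p\<close>-th difference with step \<open>h\<close> multiplies an \<open>h\<close>-antiperiodic \<open>E\<close> by \<open>(-2)\<^sup>p\<close> but
  makes \<open>Df 0\<close> small, so \<open>Df 0 - E\<close> has large \<open>L\<^sup>1\<close> norm; Cauchy--Schwarz converts this to \<open>L\<^sup>2\<close>.\<close>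

lemma integral_square_diff_antiperiodic_ge:
  fixes Df :: "nat \<Rightarrow> real \<Rightarrow> 'a::{banach, real_normed_field}"
  assumes L: "L > 0" and p: "p > 0" and h: "h > 0" "real p * h \<le> L / 2"
    and der: "\<And>k t. k < p \<Longrightarrow> t \<in> {0..L} \<Longrightarrow>
        (Df k has_vector_derivative Df (Suc k) t) (at t within {0..L})"
    and bnd: "\<And>t. t \<in> {0..L} \<Longrightarrow> norm (Df p t) \<le> K"
    and E: "continuous_on {0..L} E" "\<And>x. E (x + h) = - E x" "\<And>x. norm (E x) = 1"
    and q: "K * h ^ p \<le> 2 ^ p * q" "q < 1"
  shows "L * (1 - q)^2 / 4 \<le> integral {0..L} (\<lambda>t. (norm (Df 0 t - E t))^2)"
proof -
  define g where "g = (\<lambda>t. Df 0 t - E t)"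
  define X where "X = L / 2"
  have X: "0 \<le> X" "X + real p * h \<le> L" using L h by (auto simp: X_def)
  have g: "continuous_on {0..L} g"
    unfolding g_def using continuous_on_derivative_chain[where Dg=Df, OF p der] E(1)
    by (intro continuous_intros)
  have g': "continuous_on {0..X + real p * h} g" using continuous_on_subset[OF g] X by auto
  have low: "2 ^ p * (1 - q) \<le> norm (fwd_diff p h g x)" if x: "x \<in> {0..X}" for x
  proof -
    have "2 ^ p - K * h ^ p \<le> norm (fwd_diff p h g x)"
      unfolding g_def by (rule norm_fwd_diff_sub_antiperiodic_ge[where Df=Df and p=p and L=L and K=K and E=E and h=h, OF der bnd E(2,3)])
        (use x X h in auto)
    then show ?thesis using q by (simp add: algebra_simps)
  qed
  have "X * (2 ^ p * (1 - q)) = integral {0..X} (\<lambda>x. 2 ^ p * (1 - q))"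
    using X by simp
  also have "\<dots> \<le> integral {0..X} (\<lambda>x. norm (fwd_diff p h g x))"
    using low X h g' by (intro integral_le integrable_continuous_real continuous_intros continuous_on_fwd_diff) auto
  also have "\<dots> \<le> 2 ^ p * integral {0..X + real p * h} (\<lambda>t. norm (g t))"
    using g' X h by (intro integral_norm_fwd_diff_le) auto
  also have "integral {0..X + real p * h} (\<lambda>t. norm (g t)) \<le> integral {0..L} (\<lambda>t. norm (g t))"
    using X g by (intro integral_subset_le integrable_continuous_real continuous_intros
        continuous_on_subset[OF g]) auto
  finally have "X * (1 - q) \<le> integral {0..L} (\<lambda>t. norm (g t))"
    by (simp add: mult.left_commute)
  then have "(X * (1 - q))^2 / (L - 0) \<le> integral {0..L} (\<lambda>t. (norm (g t))^2)"
    using X q L g by (intro integral_square_ge continuous_intros) auto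
  moreover have "(X * (1 - q))^2 / (L - 0) = L * (1 - q)^2 / 4"
    using L by (simp add: X_def power2_eq_square field_simps)
  ultimately show ?thesis unfolding g_def by linarith
qed

section \<open>Choice of the constants\<close>

definition bound_value :: "nat \<Rightarrow> real \<Rightarrow> real \<Rightarrow> real" where
  "bound_value p L \<kappa> = min (L * 4 powr (- real p - 2)) (2 powr (- real p - 3) * 6 powr (1 / real p) / \<kappa>) / 9"

lemma bound_value_le_length: "bound_value p L \<kappa> \<le> L * (4 powr (- real p - 2) / 9)"
  unfolding bound_value_def by (simp add: min_def)

lemma bound_value_le_inverse: "bound_value p L \<kappa> \<le> (1 / \<kappa>) * (2 powr (- real p - 3) * 6 powr (1 / real p) / 9)"
  unfolding bound_value_def by (simp add: min_def)

lemma four_powr_minus_half: "4 powr (- real p - 5/2) = 4 powr (- real p - 2) / 2"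
proof -
  have "4 powr (- real p - 5/2) = 4 powr ((- real p - 2) + (-1/2))"
    by (rule arg_cong[where f="\<lambda>x. 4 powr x"]) simp
  also have "\<dots> = 4 powr (- real p - 2) * 4 powr (-1/2)" by (rule powr_add)
  also have "(4::real) powr (-1/2) = 1 / 2" by (simp add: powr_minus_divide powr_half_sqrt)
  finally show ?thesis by simp
qed

lemma four_powr_eq_two_powr: "4 powr (- (real p + 3) / 2) = 2 powr (- real p - 3)"
proof -
  have "4 powr (- (real p + 3) / 2) = (2 powr 2) powr (- (real p + 3) / 2)" by simp
  also have "\<dots> = 2 powr (2 * (- (real p + 3) / 2))" by (rule powr_powr)
  also have "2 * (- (real p + 3) / 2) = - real p - 3" by simp
  finally show ?thesis .
qed

lemma inverse_root_bound_eq: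
  fixes lam C :: real
  assumes lam: "lam > 0" and C: "C > 0" and p: "p > 0"
  shows "lam powr (-1/2) * (C powr (- 1 / real p) * lam powr (- 1 / real p))
    = 1 / (C * lam powr (real p / 2 + 1)) powr (1 / real p)"
proof -
  have "(C * lam powr (real p / 2 + 1)) powr (1 / real p)
      = C powr (1 / real p) * lam powr ((real p / 2 + 1) * (1 / real p))"
    using C lam by (simp add: powr_mult powr_powr)
  also have "(real p / 2 + 1) * (1 / real p) = - ((-1/2) + (- 1 / real p))"
    using p by (simp add: field_simps)
  finally have "1 / (C * lam powr (real p / 2 + 1)) powr (1 / real p)
      = C powr (- (1 / real p)) * lam powr ((-1/2) + (- 1 / real p))"
    by (simp only: powr_minus divide_inverse mult_1_left inverse_mult_distrib inverse_inverse_eq)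
  also have "\<dots> = lam powr (-1/2) * (C powr (- 1 / real p) * lam powr (- 1 / real p))"
    unfolding powr_add minus_divide_left by (simp only: mult_ac)
  finally show ?thesis ..
qed

lemma corollary_bound_eq_bound_value:
  fixes lam C :: real
  assumes lam: "lam > 0" and C: "C > 0" and p: "p > 0"
  shows "lam powr (-1/2) / 9 *
           min (4 powr (- real p - 5/2))
               (4 powr (- (real p + 3) / 2) * 6 powr (1 / real p) * C powr (- 1 / real p)
                * lam powr (- 1 / real p))
       = bound_value p ((1/2) * lam powr (-1/2)) ((C * lam powr (real p / 2 + 1)) powr (1 / real p))"
proof -
  have "lam powr (-1/2) / 9 * 4 powr (- real p - 5/2) = (1/2) * lam powr (-1/2) * 4 powr (- real p - 2) / 9"
    by (simp add: four_powr_minus_half)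
  moreover have "lam powr (-1/2) / 9 * (4 powr (- (real p + 3) / 2) * 6 powr (1 / real p)
        * C powr (- 1 / real p) * lam powr (- 1 / real p))
      = 2 powr (- real p - 3) * 6 powr (1 / real p)
        * (lam powr (-1/2) * (C powr (- 1 / real p) * lam powr (- 1 / real p))) / 9"
    by (simp add: four_powr_eq_two_powr mult_ac)
  then have "lam powr (-1/2) / 9 * (4 powr (- (real p + 3) / 2) * 6 powr (1 / real p)
        * C powr (- 1 / real p) * lam powr (- 1 / real p))
      = 2 powr (- real p - 3) * 6 powr (1 / real p) / (C * lam powr (real p / 2 + 1)) powr (1 / real p) / 9"
    unfolding inverse_root_bound_eq[OF lam C p] by simp
  moreover have "0 \<le> lam powr (-1/2) / 9" by simp
  ultimately show ?thesis
    unfolding bound_value_def min_divide_distrib_right[symmetric]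
    by (simp only: min_mult_distrib_left if_True) (simp add: mult_ac)
qed

text \<open>The constraints on \<open>\<theta>\<close>, \<open>\<alpha>\<close>, \<open>\<gamma>\<close> under which the low-frequency argument closes: \<open>\<theta>\<close>
  bounds the Taylor remainder, and the scale is \<open>\<alpha> L\<close> or \<open>min L (\<gamma> / \<kappa>)\<close>.\<close>

definition admissible :: "nat \<Rightarrow> real \<Rightarrow> real \<Rightarrow> real \<Rightarrow> bool" where
  "admissible p \<theta> \<alpha> \<gamma> \<longleftrightarrow> 0 \<le> \<theta> \<and> \<theta> < 1 \<and> 0 < \<alpha> \<and> \<alpha> \<le> 1 \<and> \<gamma> > 0 \<and>
     4 powr (- real p - 2) / 9 \<le> \<alpha> * (1 - \<theta>)^2 / (mass_coeff p)^2 \<and>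
     2 powr (- real p - 3) * 6 powr (1 / real p) / 9 \<le> \<gamma> * (1 - \<theta>)^2 / (mass_coeff p)^2 \<and>
     remainder_coeff p * (1 + 2 ^ p) * \<gamma> ^ p \<le> \<theta> \<and>
     2 * remainder_coeff p * (2 * real p * pi * \<alpha>) ^ p \<le> \<theta>"

lemma powr_minus_real_of_nat: "(x::real) > 0 \<Longrightarrow> x powr (- real n) = 1 / x ^ n"
  by (simp add: powr_minus powr_realpow divide_inverse)

lemma four_powr_minus: "4 powr (- real p - 2) = 1 / 4 ^ (p + 2)"
proof -
  have "4 powr (- real p - 2) = 4 powr (- real (p + 2))" by (rule arg_cong[where f="\<lambda>x. 4 powr x"]) simp
  also have "\<dots> = 1 / 4 ^ (p + 2)" by (rule powr_minus_real_of_nat) simp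
  finally show ?thesis .
qed

lemma two_powr_minus: "2 powr (- real p - 3) = 1 / 2 ^ (p + 3)"
proof -
  have "2 powr (- real p - 3) = 2 powr (- real (p + 3))" by (rule arg_cong[where f="\<lambda>x. 2 powr x"]) simp
  also have "\<dots> = 1 / 2 ^ (p + 3)" by (rule powr_minus_real_of_nat) simp
  finally show ?thesis .
qed

lemma six_powr_inverse_le:
  assumes "0 < r" "6 \<le> r ^ p" "p > 0"
  shows "6 powr (1 / real p) \<le> r"
proof -
  have "6 powr (1 / real p) \<le> (r ^ p) powr (1 / real p)"
    using assms by (intro powr_mono2) auto
  also have "\<dots> = r" using assms by (simp add: powr_realpow[symmetric] powr_powr)
  finally show ?thesis .
qed

lemma remainder_coeff_nonneg: "0 \<le> remainder_coeff p"
  unfolding remainder_coeff_def by (intro divide_nonneg_pos mult_nonneg_nonneg sum_nonneg) auto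

lemma mass_coeff_pos: "p > 0 \<Longrightarrow> 0 < mass_coeff p"
  unfolding mass_coeff_def by (intro mult_pos_pos sum_pos) auto

lemma admissibleI_bounds:
  fixes A B \<theta> \<alpha> \<gamma> r :: real
  assumes p: "p > 0" and A: "mass_coeff p = A" and B: "remainder_coeff p = B"
    and ranges: "0 \<le> \<theta>" "\<theta> < 1" "0 < \<alpha>" "\<alpha> \<le> 1" "\<gamma> > 0" "r > 0" "6 \<le> r ^ p"
    and c1: "1 / 4 ^ (p + 2) / 9 \<le> \<alpha> * (1 - \<theta>)^2 / A^2"
    and c2: "1 / 2 ^ (p + 3) * r / 9 \<le> \<gamma> * (1 - \<theta>)^2 / A^2"
    and c3: "B * (1 + 2 ^ p) * \<gamma> ^ p \<le> \<theta>"
    and c4: "2 * B * (2 * real p * (16 / 5) * \<alpha>) ^ p \<le> \<theta>"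
  shows "admissible p \<theta> \<alpha> \<gamma>"
proof -
  have B0: "0 \<le> B" using remainder_coeff_nonneg B by metis
  have "2 * B * (2 * real p * pi * \<alpha>) ^ p \<le> 2 * B * (2 * real p * (16 / 5) * \<alpha>) ^ p"
    using pi_approx(2) ranges B0 by (intro mult_left_mono power_mono mult_right_mono) auto
  then have C4: "2 * B * (2 * real p * pi * \<alpha>) ^ p \<le> \<theta>" using c4 by linarith
  have "2 powr (- real p - 3) * 6 powr (1 / real p) / 9 \<le> 1 / 2 ^ (p + 3) * r / 9"
    unfolding two_powr_minus using six_powr_inverse_le[OF ranges(6,7) p] by (intro divide_right_mono mult_left_mono) auto
  then have C2: "2 powr (- real p - 3) * 6 powr (1 / real p) / 9 \<le> \<gamma> * (1 - \<theta>)^2 / A^2"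
    using c2 by (rule order_trans)
  have C1: "4 powr (- real p - 2) / 9 \<le> \<alpha> * (1 - \<theta>)^2 / A^2" unfolding four_powr_minus by (rule c1)
  show ?thesis unfolding admissible_def using A B C1 C2 c3 C4 ranges by simp
qed

text \<open>For \<open>p < 8\<close> the asymptotic choice below fails; explicit parameters are checked against
  the exact rational values of the coefficients.\<close>

lemma mass_coeff_1: "mass_coeff 1 = 1" by (simp add: mass_coeff_def)
lemma remainder_coeff_1: "remainder_coeff 1 = 1/2" by (simp add: remainder_coeff_def)
lemma mass_coeff_2: "mass_coeff 2 = 11/3" by (simp add: mass_coeff_def numeral_eq_Suc)
lemma remainder_coeff_2: "remainder_coeff 2 = 13/72" by (simp add: remainder_coeff_def numeral_eq_Suc)
lemma mass_coeff_3: "mass_coeff 3 = 73/10" by (simp add: mass_coeff_def numeral_eq_Suc)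
lemma remainder_coeff_3: "remainder_coeff 3 = 299/6480" by (simp add: remainder_coeff_def numeral_eq_Suc)
lemma mass_coeff_4: "mass_coeff 4 = 1217/105" by (simp add: mass_coeff_def numeral_eq_Suc)
lemma remainder_coeff_4: "remainder_coeff 4 = 240769/25804800" by (simp add: remainder_coeff_def numeral_eq_Suc)
lemma mass_coeff_5: "mass_coeff 5 = 4127/252" by (simp add: mass_coeff_def numeral_eq_Suc)
lemma remainder_coeff_5: "remainder_coeff 5 = 110940331/70875000000" by (simp add: remainder_coeff_def numeral_eq_Suc)
lemma mass_coeff_6: "mass_coeff 6 = 49807/2310" by (simp add: mass_coeff_def numeral_eq_Suc)
lemma remainder_coeff_6: "remainder_coeff 6 = 2927859593/13036507545600" by (simp add: remainder_coeff_def numeral_eq_Suc)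
lemma mass_coeff_7: "mass_coeff 7 = 696991/25740" by (simp add: mass_coeff_def numeral_eq_Suc)
lemma remainder_coeff_7: "remainder_coeff 7 = 404530042015571/14364997216566796800" by (simp add: remainder_coeff_def numeral_eq_Suc)

lemma admissible_1: "admissible 1 (3/10) (1/22) (1/5)"
  by (rule admissibleI_bounds[OF _ mass_coeff_1 remainder_coeff_1, where r=6]) (simp_all add: power_divide numeral_eq_Suc)
lemma admissible_2: "admissible 2 (3/20) (1/20) (2/5)"
  by (rule admissibleI_bounds[OF _ mass_coeff_2 remainder_coeff_2, where r="5/2"]) (simp_all add: power_divide numeral_eq_Suc)
lemma admissible_3: "admissible 3 (3/20) (1/17) (7/10)"
  by (rule admissibleI_bounds[OF _ mass_coeff_3 remainder_coeff_3, where r="19/10"]) (simp_all add: power_divide numeral_eq_Suc)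
lemma admissible_4: "admissible 4 (1/10) (1/17) (17/20)"
  by (rule admissibleI_bounds[OF _ mass_coeff_4 remainder_coeff_4, where r="8/5"]) (simp_all add: power_divide numeral_eq_Suc)
lemma admissible_5: "admissible 5 (1/10) (1/17) (11/10)"
  by (rule admissibleI_bounds[OF _ mass_coeff_5 remainder_coeff_5, where r="3/2"]) (simp_all add: power_divide numeral_eq_Suc)
lemma admissible_6: "admissible 6 (1/10) (1/16) (27/20)"
  by (rule admissibleI_bounds[OF _ mass_coeff_6 remainder_coeff_6, where r="7/5"]) (simp_all add: power_divide numeral_eq_Suc)
lemma admissible_7: "admissible 7 (1/20) (1/17) (29/20)"
  by (rule admissibleI_bounds[OF _ mass_coeff_7 remainder_coeff_7, where r="13/10"]) (simp_all add: power_divide numeral_eq_Suc)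

lemma harmonic_sum_le_sqrt: "(\<Sum>j=1..p. 1 / real j) \<le> sqrt (2 * real p)"
proof (induction p)
  case 0 then show ?case by simp
next
  case (Suc p)
  define s where "s = sqrt (2 * real (Suc p))"
  have s: "1 \<le> s" "s * s = 2 * real (Suc p)" unfolding s_def by simp_all
  show ?case
  proof (cases "p = 0")
    case True then show ?thesis by simp
  next
    case False
    have "sqrt (2 * real p) \<le> s - 1 / s"
    proof (rule real_le_lsqrt)
      show "0 \<le> s - 1 / s" using s by (simp add: field_simps)
      have "(s - 1 / s)^2 = s * s - 2 + 1 / (s * s)" using s by (simp add: power2_eq_square field_simps)
      then show "2 * real p \<le> (s - 1 / s)^2" using s by simp
    qed
    moreover have "s \<le> real (Suc p)"
    proof -
      have "1 \<le> real p" using False by simp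
      then have "1 \<le> real p * real p" using mult_mono[of 1 "real p" 1 "real p"] by simp
      then show ?thesis unfolding s_def by (intro real_le_lsqrt) (auto simp: power2_eq_square algebra_simps)
    qed
    then have "1 / real (Suc p) \<le> 1 / s" using s by (simp add: frac_le)
    ultimately show ?thesis using Suc.IH by (simp add: s_def)
  qed
qed

lemma mass_coeff_le: "mass_coeff p \<le> 2 * real p * sqrt (2 * real p)"
proof -
  have "mass_coeff p \<le> 2 * (\<Sum>j=1..p. real p * (1 / real j))"
    unfolding mass_coeff_def
  proof (intro mult_left_mono sum_mono)
    fix j assume j: "j \<in> {1..p}"
    have "real p ^ 2 / (real j * (real p + real j)) \<le> real p ^ 2 / (real j * real p)"
      using j by (intro divide_left_mono mult_left_mono mult_pos_pos) auto
    also have "\<dots> = real p * (1 / real j)" using j by (simp add: power2_eq_square)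
    finally show "real p ^ 2 / (real j * (real p + real j)) \<le> real p * (1 / real j)" .
  qed simp
  also have "\<dots> = 2 * real p * (\<Sum>j=1..p. 1 / real j)" by (simp add: sum_distrib_left)
  also have "\<dots> \<le> 2 * real p * sqrt (2 * real p)" by (intro mult_left_mono harmonic_sum_le_sqrt) auto
  finally show ?thesis .
qed

lemma remainder_coeff_le: "remainder_coeff p \<le> 2 * real p / fact (p + 1)"
proof -
  have "(\<Sum>j=1..p. (real p / (real p + real j)) * (real j / real p) ^ (2*p)) \<le> (\<Sum>j=1..p. 1)"
  proof (intro sum_mono)
    fix j assume j: "j \<in> {1..p}"
    have "real p / (real p + real j) \<le> 1" using j by (auto simp: divide_le_eq_1)
    moreover have "(real j / real p) ^ (2*p) \<le> 1" using j by (intro power_le_one) auto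
    ultimately show "(real p / (real p + real j)) * (real j / real p) ^ (2*p) \<le> 1"
      by (intro mult_le_one) auto
  qed
  then show ?thesis unfolding remainder_coeff_def by (simp add: divide_right_mono)
qed

lemma fact_Suc_lower_bound: "8 \<le> p \<Longrightarrow> 32 * p * (1 + 2 ^ p) \<le> fact (p + 1)"
proof (induction p rule: nat_induct_at_least)
  case base then show ?case by (simp add: fact_numeral)
next
  case (Suc p)
  have "32 * Suc p * (1 + 2 ^ Suc p) \<le> 2 * (32 * Suc p * (1 + 2 ^ p))" by simp
  also have "\<dots> \<le> 2 * (32 * (2 * p) * (1 + 2 ^ p))" using Suc by (intro mult_left_mono mult_right_mono) auto
  also have "\<dots> = 4 * (32 * p * (1 + 2 ^ p))" by simp
  also have "\<dots> \<le> 4 * fact (p + 1)" using Suc by simp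
  also have "\<dots> \<le> (p + 2) * fact (p + 1)" using Suc by (intro mult_right_mono) auto
  also have "\<dots> = fact (Suc p + 1)" by (simp add: algebra_simps)
  finally show ?case .
qed

lemma power_4_le_four_power: "8 \<le> p \<Longrightarrow> p ^ 4 \<le> (4::nat) ^ p"
proof (induction p rule: nat_induct_at_least)
  case base then show ?case by simp
next
  case (Suc p)
  have "8 * p \<le> p * p" using Suc by (intro mult_right_mono) auto
  moreover have "(p + 1)^2 = p * p + 2 * p + 1" "2 * p^2 = p * p + p * p" by (simp_all add: power2_eq_square)
  ultimately have "(p + 1)^2 \<le> 2 * p^2" using Suc by linarith
  then have "((p + 1)^2)^2 \<le> (2 * p^2)^2" by (rule power_mono) simp
  moreover have "((p + 1)^2)^2 = (p + 1)^4" by (simp add: power_mult[symmetric])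
  ultimately have "(p + 1)^4 \<le> (2 * p^2)^2" by simp
  also have "\<dots> = 4 * p^4" by (simp add: power_mult_distrib power_mult[symmetric])
  also have "\<dots> \<le> 4 * 4 ^ p" using Suc by simp
  finally show ?case by simp
qed

lemma power_3_le_two_power: "8 \<le> p \<Longrightarrow> p ^ 3 \<le> 3 * (2::nat) ^ p"
proof (induction p rule: nat_induct_at_least)
  case base then show ?case by simp
next
  case (Suc p)
  have "8 * p \<le> p * p" using Suc by (intro mult_right_mono) auto
  moreover have "8 * (p * p) \<le> p * (p * p)" using Suc by (intro mult_right_mono) auto
  moreover have "(p + 1)^3 = p * (p * p) + 3 * (p * p) + 3 * p + 1" "2 * p^3 = p * (p * p) + p * (p * p)"
    by (simp_all add: power3_eq_cube algebra_simps)
  ultimately have "(p + 1)^3 \<le> 2 * p^3" using Suc by linarith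
  also have "\<dots> \<le> 2 * (3 * 2 ^ p)" using Suc by simp
  finally show ?case by simp
qed


lemma mass_coeff_square_le: "(mass_coeff p)^2 \<le> 8 * real p ^ 3"
proof -
  have "(mass_coeff p)^2 \<le> (2 * real p * sqrt (2 * real p))^2"
    using mass_coeff_le[of p] by (intro power_mono) (auto simp: mass_coeff_def intro!: sum_nonneg)
  also have "\<dots> = 8 * real p ^ 3" by (simp add: power_mult_distrib power3_eq_cube power2_eq_square)
  finally show ?thesis .
qed

lemma admissible_ge_8:
  assumes p8: "8 \<le> p"
  shows "admissible p (1/16) (1 / (8 * real p)) 1"
proof -
  have p: "p > 0" "real p \<ge> 8" using p8 by auto
  have A: "0 < (mass_coeff p)^2" "(mass_coeff p)^2 \<le> 8 * real p ^ 3"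
    using mass_coeff_pos[OF p(1)] mass_coeff_square_le by auto
  have fact: "32 * real p * (1 + 2 ^ p) \<le> fact (p + 1)"
    using of_nat_mono[OF fact_Suc_lower_bound[OF p8], where 'a=real] by (simp add: algebra_simps)
  have four: "real p ^ 4 \<le> 4 ^ p"
    using of_nat_mono[OF power_4_le_four_power[OF p8], where 'a=real] by simp
  have two: "real p ^ 3 \<le> 3 * 2 ^ p"
    using of_nat_mono[OF power_3_le_two_power[OF p8], where 'a=real] by simp
  have B: "remainder_coeff p * (1 + 2 ^ p) \<le> 1/16"
  proof -
    have "remainder_coeff p * (1 + 2 ^ p) \<le> 2 * real p / fact (p + 1) * (1 + 2 ^ p)"
      using remainder_coeff_le by (rule mult_right_mono) simp
    also have "\<dots> = 2 * real p * (1 + 2 ^ p) / fact (p + 1)" by simp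
    also have "\<dots> \<le> 1/16" using fact by (subst pos_divide_le_eq) auto
    finally show ?thesis .
  qed
  show ?thesis
  proof (rule admissibleI_bounds[OF p(1) refl refl, where r=2])
    have "1 / 4 ^ (p + 2) / 9 \<le> 1 / (144 * real p ^ 4)"
      using four p by (simp add: power_add frac_le)
    also have "\<dots> \<le> 1 / (8 * real p) * (1 - 1/16)^2 / (8 * real p ^ 3)"
      using p by (simp add: field_simps power2_eq_square power3_eq_cube numeral_eq_Suc)
    also have "\<dots> \<le> 1 / (8 * real p) * (1 - 1/16)^2 / (mass_coeff p)^2"
      using A p by (intro divide_left_mono) auto
    finally show "1 / 4 ^ (p + 2) / 9 \<le> 1 / (8 * real p) * (1 - 1/16)^2 / (mass_coeff p)^2" .
    have "1 / 2 ^ (p + 3) * 2 / 9 \<le> 1 / (12 * real p ^ 3)"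
      using two p by (simp add: power_add frac_le)
    also have "\<dots> \<le> 1 * (1 - 1/16)^2 / (8 * real p ^ 3)"
      using p by (simp add: field_simps power2_eq_square)
    also have "\<dots> \<le> 1 * (1 - 1/16)^2 / (mass_coeff p)^2"
      using A p by (intro divide_left_mono) auto
    finally show "1 / 2 ^ (p + 3) * 2 / 9 \<le> 1 * (1 - 1/16)^2 / (mass_coeff p)^2" .
    show "remainder_coeff p * (1 + 2 ^ p) * 1 ^ p \<le> 1/16" using B by simp
    have "(2 * real p * (16 / 5) * (1 / (8 * real p))) ^ p \<le> 1"
      using p by (intro power_le_one) (auto simp: field_simps)
    then have "2 * remainder_coeff p * (2 * real p * (16 / 5) * (1 / (8 * real p))) ^ p
        \<le> remainder_coeff p * 2"
      using remainder_coeff_nonneg[of p] mult_left_mono by fastforce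
    also have "\<dots> \<le> remainder_coeff p * (1 + 2 ^ p)"
      using remainder_coeff_nonneg[of p] by (intro mult_left_mono) auto
    finally show "2 * remainder_coeff p * (2 * real p * (16 / 5) * (1 / (8 * real p))) ^ p \<le> 1/16"
      using B by linarith
    have "(2::real) ^ 3 \<le> 2 ^ p" using p8 by (intro power_increasing) auto
    then show "6 \<le> (2::real) ^ p" by simp
  qed (use p in auto)
qed

lemma admissible_exists: "p > 0 \<Longrightarrow> \<exists>\<theta> \<alpha> \<gamma>. admissible p \<theta> \<alpha> \<gamma>"
proof -
  assume p: "p > 0"
  show ?thesis
  proof (cases "p \<ge> 8")
    case True then show ?thesis using admissible_ge_8 by blast
  next
    case False
    then have "p \<in> {1, 2, 3, 4, 5, 6, 7}" using p by auto
    then show ?thesis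
      using admissible_1 admissible_2 admissible_3 admissible_4 admissible_5 admissible_6 admissible_7
      by blast
  qed
qed

section \<open>The two frequency regimes\<close>

lemma has_vector_derivative_exp_i_affine:
  "((\<lambda>t. exp (\<i> * complex_of_real (a * t + b))) has_vector_derivative
     (\<i> * complex_of_real a) * exp (\<i> * complex_of_real (a * t + b))) (at t within S)"
proof -
  have "((\<lambda>z. exp (\<i> * (complex_of_real a * z + complex_of_real b))) has_field_derivative
      (\<i> * complex_of_real a) * exp (\<i> * (complex_of_real a * of_real t + complex_of_real b))) (at (of_real t))"
    by (auto intro!: derivative_eq_intros simp: algebra_simps)
  from has_vector_derivative_real_field[OF this] show ?thesis
    by (simp add: has_vector_derivative_within_subset[OF _ subset_UNIV])
qed

lemma exp_i_affine_antiperiodic: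
  assumes "a \<noteq> 0"
  shows "exp (\<i> * complex_of_real (a * (t + pi / \<bar>a\<bar>) + b)) = - exp (\<i> * complex_of_real (a * t + b))"
proof -
  have "exp (\<i> * complex_of_real (a * pi / \<bar>a\<bar>)) = -1"
    using assms by (cases "a > 0") (simp_all add: exp_minus)
  moreover have "exp (\<i> * complex_of_real (a * (t + pi / \<bar>a\<bar>) + b))
      = exp (\<i> * complex_of_real (a * t + b)) * exp (\<i> * complex_of_real (a * pi / \<bar>a\<bar>))"
    by (simp add: exp_add[symmetric] algebra_simps)
  ultimately show ?thesis by simp
qed

lemma bound_value_le_high_frequency:
  fixes Df :: "nat \<Rightarrow> real \<Rightarrow> complex"
  assumes L: "L > 0" and p: "p > 0" and \<kappa>: "\<kappa> > 0"
    and der: "\<And>k t. k < p \<Longrightarrow> t \<in> {0..L} \<Longrightarrow>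
        (Df k has_vector_derivative Df (Suc k) t) (at t within {0..L})"
    and bnd: "\<And>t. t \<in> {0..L} \<Longrightarrow> norm (Df p t) \<le> \<kappa> ^ p"
    and freq: "2 * \<kappa> \<le> \<bar>\<phi>\<bar>" "2 * real p * pi / L \<le> \<bar>\<phi>\<bar>"
  shows "bound_value p L \<kappa> \<le> integral {0..L} (\<lambda>t. (cmod (Df 0 t - exp (\<i> * complex_of_real (\<phi> * t + \<phi>0))))^2)"
proof -
  define h where "h = pi / \<bar>\<phi>\<bar>"
  have nonzero: "\<phi> \<noteq> 0" using freq \<kappa> by auto
  have h: "h > 0" "real p * h \<le> L / 2"
    using nonzero freq(2) L by (auto simp: h_def field_simps)
  have "\<kappa> ^ p * h ^ p \<le> (pi / 2) ^ p"
    unfolding power_mult_distrib[symmetric] using freq(1) \<kappa> nonzero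
    by (intro power_mono) (auto simp: h_def field_simps)
  also have "\<dots> = 2 ^ p * (pi / 4) ^ p" by (simp add: power_mult_distrib[symmetric])
  also have "\<dots> \<le> 2 ^ p * (pi / 4)"
    using p pi_less_4 power_decreasing[of 1 p "pi / 4"] by auto
  finally have "L * (1 - pi / 4)^2 / 4 \<le>
      integral {0..L} (\<lambda>t. (cmod (Df 0 t - exp (\<i> * complex_of_real (\<phi> * t + \<phi>0))))^2)"
    using pi_less_4 exp_i_affine_antiperiodic[OF nonzero]
    by (intro integral_square_diff_antiperiodic_ge[OF L p h der bnd])
      (auto simp: h_def norm_exp_i_times intro!: continuous_on_exp continuous_intros)
  moreover have "bound_value p L \<kappa> \<le> L * (1 - pi / 4)^2 / 4"
  proof -
    have "(4::real) ^ 3 \<le> 4 ^ (p + 2)" using p by (intro power_increasing) auto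
    then have "4 powr (- real p - 2) \<le> 1 / 64" unfolding four_powr_minus by (simp add: field_simps)
    moreover have "1 / 144 \<le> (1 - pi / 4)^2"
      using pi_approx(2) power_mono[of "1/12" "1 - pi / 4" 2] by (simp add: power_divide)
    ultimately have "L * (4 powr (- real p - 2) / 9) \<le> L * ((1 - pi / 4)^2 / 4)"
      using L by (intro mult_left_mono) auto
    then show ?thesis using bound_value_le_length[of p L \<kappa>] by simp
  qed
  ultimately show ?thesis by linarith
qed

lemma admissible_scale_exists:
  assumes adm: "admissible p \<theta> \<alpha> \<gamma>" and L: "L > 0" and \<kappa>: "\<kappa> > 0" and p: "p > 0"
    and freq: "\<not> (2 * \<kappa> \<le> \<bar>\<phi>\<bar> \<and> 2 * real p * pi / L \<le> \<bar>\<phi>\<bar>)"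
  obtains D where "0 < D" "D \<le> L" "remainder_coeff p * (\<kappa> ^ p + \<bar>\<phi>\<bar> ^ p) * D ^ p \<le> \<theta>"
    "bound_value p L \<kappa> \<le> D * (1 - \<theta>)^2 / (mass_coeff p)^2"
proof -
  define a where "a = mass_coeff p"
  define b where "b = remainder_coeff p"
  have b: "b \<ge> 0" using remainder_coeff_nonneg by (simp add: b_def)
  have \<alpha>: "0 < \<alpha>" "\<alpha> \<le> 1" and \<gamma>: "\<gamma> > 0"
    and C1: "4 powr (- real p - 2) / 9 \<le> \<alpha> * (1 - \<theta>)^2 / a^2"
    and C2: "2 powr (- real p - 3) * 6 powr (1 / real p) / 9 \<le> \<gamma> * (1 - \<theta>)^2 / a^2"
    and C3: "b * (1 + 2 ^ p) * \<gamma> ^ p \<le> \<theta>"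
    and C4: "2 * b * (2 * real p * pi * \<alpha>) ^ p \<le> \<theta>"
    using adm by (simp_all add: admissible_def a_def b_def)
  have "L * (4 powr (- real p - 2) / 9) \<le> L * (\<alpha> * (1 - \<theta>)^2 / a^2)"
    using C1 L by (intro mult_left_mono) auto
  moreover have "L * (\<alpha> * (1 - \<theta>)^2 / a^2) = \<alpha> * L * (1 - \<theta>)^2 / a^2" by simp
  ultimately have length: "bound_value p L \<kappa> \<le> \<alpha> * L * (1 - \<theta>)^2 / a^2"
    using bound_value_le_length[of p L \<kappa>] by linarith
  show ?thesis
  proof (cases "2 * real p * pi / L \<le> 2 * \<kappa>")
    case True
    define D where "D = min L (\<gamma> / \<kappa>)"
    have D: "0 < D" "D \<le> L" "D \<le> \<gamma> / \<kappa>" using L \<kappa> \<gamma> by (auto simp: D_def)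
    have "\<bar>\<phi>\<bar> ^ p \<le> 2 ^ p * \<kappa> ^ p"
      using True freq power_mono[of "\<bar>\<phi>\<bar>" "2 * \<kappa>" p] by (simp add: power_mult_distrib)
    then have "\<kappa> ^ p + \<bar>\<phi>\<bar> ^ p \<le> (1 + 2 ^ p) * \<kappa> ^ p" by (simp add: algebra_simps)
    moreover have "D ^ p \<le> (\<gamma> / \<kappa>) ^ p" using D by (intro power_mono) auto
    ultimately have "b * (\<kappa> ^ p + \<bar>\<phi>\<bar> ^ p) * D ^ p \<le> b * ((1 + 2 ^ p) * \<kappa> ^ p) * (\<gamma> / \<kappa>) ^ p"
      using D b \<kappa> by (intro mult_mono mult_left_mono) auto
    also have "\<dots> = b * (1 + 2 ^ p) * \<gamma> ^ p" using \<kappa> by (simp add: power_divide)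
    finally have remainder: "b * (\<kappa> ^ p + \<bar>\<phi>\<bar> ^ p) * D ^ p \<le> \<theta>" using C3 by linarith
    have "bound_value p L \<kappa> \<le> D * (1 - \<theta>)^2 / a^2"
    proof (cases "L \<le> \<gamma> / \<kappa>")
      case True
      have "\<alpha> * L * (1 - \<theta>)^2 / a^2 \<le> L * (1 - \<theta>)^2 / a^2"
        using \<alpha> L by (intro divide_right_mono mult_right_mono) auto
      then show ?thesis using length True by (simp add: D_def)
    next
      case False
      have "(1 / \<kappa>) * (2 powr (- real p - 3) * 6 powr (1 / real p) / 9) \<le> (1 / \<kappa>) * (\<gamma> * (1 - \<theta>)^2 / a^2)"
        using C2 \<kappa> by (intro mult_left_mono) auto
      then show ?thesis using bound_value_le_inverse[of p L \<kappa>] False by (simp add: D_def)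
    qed
    with D remainder show ?thesis by (intro that) (auto simp: a_def b_def)
  next
    case False
    then have "\<kappa> ^ p \<le> (2 * real p * pi / L) ^ p" "\<bar>\<phi>\<bar> ^ p \<le> (2 * real p * pi / L) ^ p"
      using freq \<kappa> by (auto intro!: power_mono)
    then have "b * (\<kappa> ^ p + \<bar>\<phi>\<bar> ^ p) * (\<alpha> * L) ^ p \<le> b * (2 * (2 * real p * pi / L) ^ p) * (\<alpha> * L) ^ p"
      using b \<alpha> L by (intro mult_right_mono mult_left_mono) auto
    also have "\<dots> = 2 * b * (2 * real p * pi * \<alpha>) ^ p"
      using L by (simp add: field_simps)
    finally have "b * (\<kappa> ^ p + \<bar>\<phi>\<bar> ^ p) * (\<alpha> * L) ^ p \<le> \<theta>" using C4 by linarith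
    moreover have "0 < \<alpha> * L" "\<alpha> * L \<le> L" using \<alpha> L by (auto simp: mult_le_cancel_right1)
    ultimately show ?thesis using length by (intro that[of "\<alpha> * L"]) (auto simp: a_def b_def)
  qed
qed

lemma mass_lower_bound:
  assumes "1 \<le> a * sqrt (J / D) + B" "B \<le> \<theta>" "\<theta> < 1" "a > 0" "D > 0" "J \<ge> 0"
  shows "D * (1 - \<theta>)^2 / a^2 \<le> J"
proof -
  have "(1 - \<theta>) / a \<le> sqrt (J / D)" using assms by (simp add: field_simps)
  moreover have "0 \<le> (1 - \<theta>) / a" using assms by simp
  ultimately have "((1 - \<theta>) / a)^2 \<le> J / D"
    using assms by (metis power_mono real_sqrt_pow2 divide_nonneg_nonneg less_imp_le)
  then show ?thesis using assms by (simp add: field_simps power_divide)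
qed

lemma bound_value_le_low_frequency:
  fixes Df :: "nat \<Rightarrow> real \<Rightarrow> complex"
  assumes L: "L > 0" and p: "p > 0" and \<kappa>: "\<kappa> > 0"
    and der: "\<And>k t. k < p \<Longrightarrow> t \<in> {0..L} \<Longrightarrow>
        (Df k has_vector_derivative Df (Suc k) t) (at t within {0..L})"
    and bnd: "\<And>t. t \<in> {0..L} \<Longrightarrow> norm (Df p t) \<le> \<kappa> ^ p"
    and Df0: "Df 0 0 = 0"
    and freq: "\<not> (2 * \<kappa> \<le> \<bar>\<phi>\<bar> \<and> 2 * real p * pi / L \<le> \<bar>\<phi>\<bar>)"
  shows "bound_value p L \<kappa> \<le> integral {0..L} (\<lambda>t. (cmod (Df 0 t - exp (\<i> * complex_of_real (\<phi> * t + \<phi>0))))^2)"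
proof -
  define E where "E = (\<lambda>t. exp (\<i> * complex_of_real (\<phi> * t + \<phi>0)))"
  define Dg where "Dg = (\<lambda>k t. Df k t - (\<i> * complex_of_real \<phi>) ^ k * E t)"
  have derG: "(Dg k has_vector_derivative Dg (Suc k) t) (at t within {0..D})"
    if "D \<le> L" "k < p" "t \<in> {0..D}" for D k t
  proof -
    have "(Df k has_vector_derivative Df (Suc k) t) (at t within {0..D})"
      using that by (intro has_vector_derivative_within_subset[OF der]) auto
    moreover have "((\<lambda>t. (\<i> * complex_of_real \<phi>) ^ k * E t) has_vector_derivative
        (\<i> * complex_of_real \<phi>) ^ k * ((\<i> * complex_of_real \<phi>) * E t)) (at t within {0..D})"
      unfolding E_def by (intro has_vector_derivative_mult_right has_vector_derivative_exp_i_affine)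
    ultimately show ?thesis
      unfolding Dg_def power_Suc2 mult.assoc by (rule has_vector_derivative_diff)
  qed
  have bndG: "norm (Dg p t) \<le> \<kappa> ^ p + \<bar>\<phi>\<bar> ^ p" if "D \<le> L" "t \<in> {0..D}" for D t
    using norm_triangle_ineq4[of "Df p t" "(\<i> * complex_of_real \<phi>) ^ p * E t"] bnd[of t] that
    by (simp add: Dg_def E_def norm_mult norm_power norm_exp_i_times)
  define J where "J = (\<lambda>D. integral {0..D} (\<lambda>t. (norm (Dg 0 t))^2))"
  have contJ: "continuous_on {0..L} (\<lambda>t. (norm (Dg 0 t))^2)"
    using continuous_on_derivative_chain[where Dg=Dg, OF p derG[OF order_refl]] by (intro continuous_intros)
  obtain \<theta> \<alpha> \<gamma> where adm: "admissible p \<theta> \<alpha> \<gamma>" using admissible_exists[OF p] by blast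
  obtain D where D: "0 < D" "D \<le> L"
    and remainder: "remainder_coeff p * (\<kappa> ^ p + \<bar>\<phi>\<bar> ^ p) * D ^ p \<le> \<theta>"
    and scale: "bound_value p L \<kappa> \<le> D * (1 - \<theta>)^2 / (mass_coeff p)^2"
    using admissible_scale_exists[OF adm L \<kappa> p freq] .
  have "norm (Dg 0 0) = 1" by (simp add: Dg_def E_def Df0 norm_exp_i_times)
  moreover have "norm (Dg 0 0) \<le> mass_coeff p * sqrt (J D / D) + remainder_coeff p * (\<kappa> ^ p + \<bar>\<phi>\<bar> ^ p) * D ^ p"
    unfolding J_def by (rule norm_at_0_le_mass[where Dg=Dg, OF p D(1) derG[OF D(2)] bndG[OF D(2)]])
  moreover have J: "0 \<le> J D" "J D \<le> J L"
    unfolding J_def using D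
    by (intro integral_nonneg integral_subset_le integrable_continuous_real
        continuous_on_subset[OF contJ]; auto)+
  moreover have "\<theta> < 1" using adm by (simp add: admissible_def)
  ultimately have "D * (1 - \<theta>)^2 / (mass_coeff p)^2 \<le> J D"
    using remainder mass_coeff_pos[OF p] D by (intro mass_lower_bound) auto
  with scale J show ?thesis by (simp add: J_def Dg_def E_def)
qed

theorem corollary4p6:
  fixes lam C :: real and p :: nat
    and f :: "real \<Rightarrow> complex" and Df :: "nat \<Rightarrow> real \<Rightarrow> complex"
    and phi0 phi1 :: real
  assumes lam_pos: "lam > 0"
    and p_pos: "p \<ge> 1"
    and C_pos: "C > 0"
    and Df0: "\<And>t. t \<in> {0..(1/2) * lam powr (-1/2)} \<Longrightarrow> Df 0 t = f t"
    and Df_deriv: "\<And>k t. k < p \<Longrightarrow> t \<in> {0..(1/2) * lam powr (-1/2)} \<Longrightarrow>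
        (Df k has_vector_derivative Df (Suc k) t) (at t within {0..(1/2) * lam powr (-1/2)})"
    and Df_cont: "continuous_on {0..(1/2) * lam powr (-1/2)} (Df p)"
    and f0: "f 0 = 0"
    and bound: "\<And>t. t \<in> {0..(1/2) * lam powr (-1/2)} \<Longrightarrow>
        norm (Df p t) \<le> C * lam powr (real p / 2 + 1)"
  shows "integral {0..(1/2) * lam powr (-1/2)}
           (\<lambda>t. (cmod (f t - exp (\<i> * complex_of_real (phi1 * t + phi0))))^2)
         \<ge> lam powr (-1/2) / 9 *
           min (4 powr (- real p - 5/2))
               (4 powr (- (real p + 3) / 2) * 6 powr (1 / real p) * C powr (- 1 / real p)
                * lam powr (- 1 / real p))"
proof -
  define L where "L = (1/2) * lam powr (-1/2)"
  define \<kappa> where "\<kappa> = (C * lam powr (real p / 2 + 1)) powr (1 / real p)"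
  have p: "p > 0" and L: "L > 0" and \<kappa>: "\<kappa> > 0"
    using p_pos lam_pos C_pos by (auto simp: L_def \<kappa>_def)
  have der: "\<And>k t. k < p \<Longrightarrow> t \<in> {0..L} \<Longrightarrow>
      (Df k has_vector_derivative Df (Suc k) t) (at t within {0..L})"
    using Df_deriv unfolding L_def .
  have bnd: "\<And>t. t \<in> {0..L} \<Longrightarrow> norm (Df p t) \<le> \<kappa> ^ p"
    using bound lam_pos C_pos p by (simp add: L_def \<kappa>_def powr_realpow[symmetric] powr_powr)
  have "Df 0 0 = 0" using Df0[of 0] f0 L by (simp add: L_def)
  then have "bound_value p L \<kappa> \<le>
      integral {0..L} (\<lambda>t. (cmod (Df 0 t - exp (\<i> * complex_of_real (phi1 * t + phi0))))^2)"
    using bound_value_le_high_frequency[OF L p \<kappa> der bnd] bound_value_le_low_frequency[OF L p \<kappa> der bnd]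
    by blast
  also have "\<dots> = integral {0..L} (\<lambda>t. (cmod (f t - exp (\<i> * complex_of_real (phi1 * t + phi0))))^2)"
    by (rule integral_cong) (simp add: Df0 L_def)
  finally show ?thesis
    using corollary_bound_eq_bound_value[OF lam_pos C_pos p] by (simp add: L_def \<kappa>_def)
qed
end
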